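(* If $\beta:\mathbf D\to\mathbf R_{>0}$ satisfies $\sum_{d\in\mathbf D}\beta(d)^p<\infty$ for some $0<p<1/2$, then the action $\theta:\mathbf Z_{fr}\curvearrowright(\mathbf Z^{\mathbf D},m_\beta^{\mathbf D})$, $(g\cdot x)(d)=g(d)+x(d)$, is ergodic.
   Context: $\mathbf D=\{a/2^n:n\ge1,0\le a\le2^n-1\}\subset[0,1)$. For $b>0$, $m_b(\{n\})=e^{-n^2b/2}/Z_b$ with $Z_b=\sum_ke^{-k^2b/2}$; $m_\beta^{\mathbf D}=\bigotimes_dm_{\beta(d)}$ on $\mathbf Z^{\mathbf D}$ with the product $\sigma$-algebra. $\mathbf Z_{fr}$ is the group of maps $g:\mathbf D\to\mathbf Z$ for which there is a standard dyadic partition $0=d_1<\dots<d_{n+1}=1$ (each $(d_j,d_{j+1})$ of the form $(a/2^k,(a+1)/2^k)$) with $g$ constant on each $[d_j,d_{j+1})\cap\mathbf D$. *)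

theory Defs
  imports "HOL-Probability.Probability"
begin

definition Dy :: "real set" where
  "Dy = {real a / 2 ^ n | a n :: nat. n \<ge> 1 \<and> a < 2 ^ n}"

definition Zb :: "real \<Rightarrow> real" where
  "Zb b = (\<Sum>\<^sub>\<infinity>k::int. exp (- (real_of_int k * real_of_int k) * b / 2))"

definition mb :: "real \<Rightarrow> int measure" where
  "mb b = density (count_space UNIV)
            (\<lambda>n. ennreal (exp (- (real_of_int n * real_of_int n) * b / 2) / Zb b))"

definition mbetaD :: "(real \<Rightarrow> real) \<Rightarrow> (real \<Rightarrow> int) measure" where
  "mbetaD \<beta> = PiM Dy (\<lambda>d. mb (\<beta> d))"

definition dyadic_interval :: "real \<Rightarrow> real \<Rightarrow> bool" where
  "dyadic_interval x y \<longleftrightarrow> (\<exists>a k :: nat. x = real a / 2 ^ k \<and> y = (real a + 1) / 2 ^ k)"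

definition std_dyadic_partition :: "real list \<Rightarrow> bool" where
  "std_dyadic_partition ds \<longleftrightarrow> length ds \<ge> 2 \<and> ds ! 0 = 0 \<and> last ds = 1 \<and>
     (\<forall>j. Suc j < length ds \<longrightarrow> ds ! j < ds ! Suc j \<and> dyadic_interval (ds ! j) (ds ! Suc j))"

definition Zfr :: "(real \<Rightarrow> int) set" where
  "Zfr = {g \<in> extensional Dy. \<exists>ds. std_dyadic_partition ds \<and>
      (\<forall>j. Suc j < length ds \<longrightarrow>
         (\<forall>d\<in>Dy. \<forall>d'\<in>Dy. ds ! j \<le> d \<and> d < ds ! Suc j \<and> ds ! j \<le> d' \<and> d' < ds ! Suc j
             \<longrightarrow> g d = g d'))}"

definition act :: "(real \<Rightarrow> int) \<Rightarrow> (real \<Rightarrow> int) \<Rightarrow> (real \<Rightarrow> int)" where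
  "act g x = restrict (\<lambda>d. g d + x d) Dy"

definition ergodic_action :: "(real \<Rightarrow> int) measure \<Rightarrow> bool" where
  "ergodic_action M \<longleftrightarrow> (\<forall>A \<in> sets M.
      (\<forall>g\<in>Zfr. \<forall>x\<in>space M. act g x \<in> A \<longleftrightarrow> x \<in> A) \<longrightarrow>
      emeasure M A = 0 \<or> emeasure M (space M - A) = 0)"

end

theory Submission
  imports Defs
begin

text \<open>Translating \<open>x\<close> by \<open>g \<in> Z\<^sub>f\<^sub>r\<close> replaces the law \<open>m\<^bsub>\<beta>(d)\<^esub>\<close> of the coordinate
  \<open>x(d)\<close> by its translate by \<open>g(d)\<close>, which is within total variation
  \<open>\<bar>g(d)\<bar> m\<^bsub>\<beta>(d)\<^esub>{0} = \<bar>g(d)\<bar> / Z\<^bsub>\<beta>(d)\<^esub> \<le> 2 \<bar>g(d)\<bar> \<beta>(d)\<^sup>p\<close> of it; for product measures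
  these distances add up. Given finitely many coordinates \<open>F\<close> and values \<open>v\<close>, choose \<open>g \<in> Z\<^sub>f\<^sub>r\<close>
  equal to \<open>v\<close> on \<open>F\<close>, bounded by \<open>\<Sum>\<^sub>F \<bar>v\<bar>\<close>, and vanishing on a finite set that carries all
  but \<open>\<epsilon>\<close> of \<open>\<Sum> \<beta>\<^sup>p\<close>. For an invariant event \<open>A\<close> this shows that the conditional
  probabilities of \<open>A\<close> given \<open>x|\<^sub>F = v\<close> and given \<open>x|\<^sub>F = 0\<close> differ by \<open>O(\<epsilon>)\<close>, hence agree.
  So \<open>A\<close> is independent of every cylinder event, hence of itself, and has measure \<open>0\<close> or \<open>1\<close>.\<close>

section \<open>The discrete Gaussian measure\<close>

definition gauss_weight :: "real \<Rightarrow> int \<Rightarrow> real" where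
  "gauss_weight b k = exp (- (real_of_int k * real_of_int k) * b / 2)"

lemma gauss_weight_pos: "gauss_weight b k > 0"
  by (simp add: gauss_weight_def)

lemma gauss_weight_antimono:
  assumes "b \<ge> 0" "\<bar>m\<bar> \<le> \<bar>n\<bar>"
  shows "gauss_weight b n \<le> gauss_weight b m"
proof -
  have "\<bar>m\<bar> * \<bar>m\<bar> \<le> \<bar>n\<bar> * \<bar>n\<bar>" using assms(2) by (intro mult_mono) auto
  hence "real_of_int (m * m) \<le> real_of_int (n * n)" by (simp only: abs_mult_self_eq of_int_le_iff)
  thus ?thesis using assms(1) by (simp add: gauss_weight_def mult_right_mono)
qed

lemma summable_gauss_weight_nat:
  assumes "b > 0"
  shows "summable (\<lambda>n::nat. gauss_weight b (int n))"
proof (rule summable_comparison_test[of _ "\<lambda>n. exp (- b / 2) ^ n"])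
  show "summable (\<lambda>n::nat. exp (- b / 2) ^ n)"
    using assms by (intro summable_geometric) auto
  have "gauss_weight b (int n) \<le> exp (- b / 2) ^ n" for n
  proof -
    have "real n \<le> real n * real n" by (cases n) auto
    hence "- (real n * real n) * b / 2 \<le> - b / 2 * real n"
      using assms by (simp add: mult_right_mono)
    thus ?thesis by (simp add: gauss_weight_def exp_of_nat_mult[symmetric] mult.commute)
  qed
  thus "\<exists>N. \<forall>n\<ge>N. norm (gauss_weight b (int n)) \<le> exp (- b / 2) ^ n"
    using gauss_weight_pos by (simp add: less_imp_le)
qed

lemma gauss_weight_summable_on:
  assumes "b > 0"
  shows "gauss_weight b summable_on UNIV"
proof -
  have nat: "(\<lambda>n::nat. gauss_weight b (int n)) summable_on UNIV"
    using summable_gauss_weight_nat[OF assms] gauss_weight_pos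
    by (subst summable_on_UNIV_nonneg_real_iff) (auto intro: less_imp_le)
  have "gauss_weight b summable_on range int"
    using nat by (subst summable_on_reindex) (auto simp: o_def)
  moreover have "gauss_weight b summable_on range (\<lambda>n. - int n)"
    using nat by (subst summable_on_reindex) (auto simp: o_def inj_on_def gauss_weight_def)
  ultimately have "gauss_weight b summable_on (range int \<union> range (\<lambda>n. - int n))"
    by (rule summable_on_union)
  moreover have "range int \<union> range (\<lambda>n. - int n) = UNIV"
    by (auto intro: int_cases2[of x for x])
  ultimately show ?thesis by simp
qed

lemma Zb_eq_infsum: "Zb b = infsum (gauss_weight b) UNIV"
  unfolding Zb_def gauss_weight_def by (simp add: mult.assoc)

lemma sum_gauss_weight_le_Zb:
  assumes "b > 0" "finite K"
  shows "sum (gauss_weight b) K \<le> Zb b"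
  unfolding Zb_eq_infsum
  using assms gauss_weight_summable_on[OF assms(1)] gauss_weight_pos
  by (intro finite_sum_le_infsum) (auto intro: less_imp_le)

lemma Zb_ge_1:
  assumes "b > 0"
  shows "Zb b \<ge> 1"
  using sum_gauss_weight_le_Zb[OF assms, of "{0}"] by (simp add: gauss_weight_def)

text \<open>All weights with \<open>\<bar>k\<bar> \<le> 1 / sqrt b\<close> are at least \<open>exp (-1/2) \<ge> 1/2\<close>.\<close>
lemma inverse_Zb_le_sqrt:
  assumes "b > 0"
  shows "1 / Zb b \<le> 2 * sqrt b"
proof -
  define N where "N = nat \<lfloor>1 / sqrt b\<rfloor>"
  have N: "real N \<le> 1 / sqrt b" "1 / sqrt b < real N + 1"
    using assms by (simp_all add: N_def)
  have "1 / 2 \<le> gauss_weight b k" if "k \<in> {- int N..int N}" for k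
  proof -
    have "\<bar>real_of_int k\<bar> \<le> 1 / sqrt b" using that N(1) by auto
    hence "\<bar>real_of_int k\<bar> * \<bar>real_of_int k\<bar> \<le> (1 / sqrt b) * (1 / sqrt b)"
      using assms by (intro mult_mono) auto
    hence "real_of_int k * real_of_int k \<le> (1 / sqrt b) * (1 / sqrt b)"
      by (simp only: abs_mult_self_eq)
    also have "\<dots> = 1 / b" using assms by (simp add: divide_simps)
    finally have "real_of_int k * real_of_int k * b \<le> 1"
      using assms by (simp add: field_simps)
    hence "exp (- 1 / 2) \<le> gauss_weight b k" by (simp add: gauss_weight_def)
    moreover have "1 / 2 \<le> exp (- 1 / 2 :: real)"
      using exp_ge_add_one_self[of "- 1 / 2 :: real"] by simp
    ultimately show ?thesis by linarith
  qed
  hence "(\<Sum>k\<in>{- int N..int N}. 1 / 2) \<le> sum (gauss_weight b) {- int N..int N}"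
    by (intro sum_mono)
  also have "\<dots> \<le> Zb b" using assms by (intro sum_gauss_weight_le_Zb) auto
  finally have "real N + 1 \<le> 2 * Zb b" by simp
  hence "1 / sqrt b \<le> 2 * Zb b" using N(2) by linarith
  thus ?thesis using assms Zb_ge_1[OF assms] by (simp add: field_simps)
qed

lemma inverse_Zb_le_powr:
  assumes "b > 0" "0 \<le> p" "p \<le> 1 / 2"
  shows "1 / Zb b \<le> 2 * b powr p"
proof (cases "b < 1")
  case True
  have "sqrt b = b powr (1 / 2)" using assms by (simp add: powr_half_sqrt)
  also have "\<dots> \<le> b powr p" using True assms by (intro powr_mono') auto
  finally show ?thesis using inverse_Zb_le_sqrt[OF assms(1)] by linarith
next
  case False
  hence "1 \<le> b powr p" using assms by (simp add: ge_one_powr_ge_zero)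
  moreover have "1 / Zb b \<le> 1" using Zb_ge_1[OF assms(1)] by simp
  ultimately show ?thesis by simp
qed

lemma nn_integral_count_space_eq_infsum:
  fixes f :: "'a \<Rightarrow> real"
  assumes "f summable_on A" "\<And>x. x \<in> A \<Longrightarrow> f x \<ge> 0"
  shows "(\<integral>\<^sup>+ x. ennreal (f x) \<partial>count_space A) = ennreal (infsum f A)"
proof -
  have "(\<lambda>x. norm (f x)) summable_on A"
    using assms by (subst summable_on_cong[where g = f]) auto
  hence "Infinite_Set_Sum.abs_summable_on f A"
    using abs_summable_equivalent by blast
  thus ?thesis
    using assms nn_integral_conv_infsetsum infsetsum_infsum by metis
qed

definition gauss_pmf :: "real \<Rightarrow> int \<Rightarrow> real" where
  "gauss_pmf b n = gauss_weight b n / Zb b"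

lemma gauss_pmf_0: "gauss_pmf b 0 = 1 / Zb b"
  by (simp add: gauss_pmf_def gauss_weight_def)

lemma gauss_pmf_pos: "b > 0 \<Longrightarrow> gauss_pmf b n > 0"
  using Zb_ge_1[of b] gauss_weight_pos[of b n] by (simp add: gauss_pmf_def)

lemma gauss_pmf_antimono:
  assumes "b > 0" "\<bar>m\<bar> \<le> \<bar>n\<bar>"
  shows "gauss_pmf b n \<le> gauss_pmf b m"
  using gauss_weight_antimono[of b m n] Zb_ge_1[of b] assms
  by (simp add: gauss_pmf_def divide_right_mono)

lemma mb_eq_density: "mb b = density (count_space UNIV) (\<lambda>n. ennreal (gauss_pmf b n))"
  unfolding mb_def gauss_pmf_def gauss_weight_def by simp

lemma sets_mb [simp, measurable_cong]: "sets (mb b) = sets (count_space UNIV)"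
  by (simp add: mb_eq_density)

lemma space_mb [simp]: "space (mb b) = UNIV"
  by (simp add: mb_eq_density)

lemma emeasure_mb:
  "emeasure (mb b) E = (\<integral>\<^sup>+ n. ennreal (gauss_pmf b n) * indicator E n \<partial>count_space UNIV)"
  by (simp add: mb_eq_density emeasure_density)

lemma prob_space_mb:
  assumes "b > 0"
  shows "prob_space (mb b)"
proof
  have summable: "gauss_pmf b summable_on UNIV"
    unfolding gauss_pmf_def divide_inverse
    by (intro summable_on_cmult_left gauss_weight_summable_on assms)
  have "emeasure (mb b) (space (mb b)) = (\<integral>\<^sup>+ n. ennreal (gauss_pmf b n) \<partial>count_space UNIV)"
    by (simp add: emeasure_mb)
  also have "\<dots> = ennreal (infsum (gauss_pmf b) UNIV)"
    using summable gauss_pmf_pos[OF assms]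
    by (intro nn_integral_count_space_eq_infsum) (auto intro: less_imp_le)
  also have "infsum (gauss_pmf b) UNIV = 1"
    unfolding gauss_pmf_def divide_inverse infsum_cmult_left'
    using Zb_ge_1[OF assms] by (simp add: Zb_eq_infsum)
  finally show "emeasure (mb b) (space (mb b)) = 1" by simp
qed

lemma emeasure_mb_vimage_add:
  "emeasure (mb b) ((+) c -` S) =
     (\<integral>\<^sup>+ m. ennreal (gauss_pmf b (m - c)) * indicator S m \<partial>count_space UNIV)"
proof -
  have bij: "bij_betw (\<lambda>m. m - c) UNIV (UNIV :: int set)"
    by (rule bij_betwI[where g = "\<lambda>n. n + c"]) auto
  show ?thesis
    unfolding emeasure_mb
    using nn_integral_bij_count_space[OF bij,
        of "\<lambda>n. ennreal (gauss_pmf b n) * indicator ((+) c -` S) n"]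
    by (simp add: indicator_def)
qed

lemma emeasure_mb_vimage_add_mono:
  assumes "b > 0" "\<And>m. m \<in> S \<Longrightarrow> \<bar>m - c'\<bar> \<le> \<bar>m - c\<bar>"
  shows "emeasure (mb b) ((+) c -` S) \<le> emeasure (mb b) ((+) c' -` S)"
  unfolding emeasure_mb_vimage_add using assms
  by (intro nn_integral_mono) (auto simp: indicator_def intro!: ennreal_leI gauss_pmf_antimono)

text \<open>For \<open>c = \<pm>1\<close> the translate of \<open>mb b\<close> by \<open>c\<close> has a larger density than \<open>mb b\<close> off the
  half-line \<open>H = {m. c * m \<le> 0}\<close> and a smaller one on \<open>H\<close>, where the two masses differ exactly
  by the mass of the origin.\<close>
lemma measure_mb_le_vimage_add_unit:
  assumes b: "b > 0" and c: "c = 1 \<or> c = -1"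
  shows "measure (mb b) E \<le> measure (mb b) ((+) c -` E) + gauss_pmf b 0"
proof -
  interpret prob_space "mb b" by (rule prob_space_mb[OF b])
  define P where "P S = measure (mb b) S" for S
  define Q where "Q S = measure (mb b) ((+) c -` S)" for S
  define H where "H = {m. c * m \<le> 0}"
  have P_split: "P S = P (S \<inter> T) + P (S - T)" for S T
    unfolding P_def by (subst finite_measure_Union[symmetric]) (auto simp: Int_Diff_Un)
  have Q_split: "Q S = Q (S \<inter> T) + Q (S - T)" for S T
    unfolding Q_def vimage_Int vimage_Diff by (rule P_split[unfolded P_def])
  have outside: "P S \<le> Q S" if disjoint: "S \<inter> H = {}" for S
  proof -
    have "\<bar>m - c\<bar> \<le> \<bar>m - 0\<bar>" if "m \<in> S" for m
      using that disjoint c unfolding H_def by auto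
    thus ?thesis
      using emeasure_mb_vimage_add_mono[OF b, of S c 0]
      by (simp add: P_def Q_def emeasure_eq_measure vimage_def)
  qed
  have inside: "Q S \<le> P S" if "S \<subseteq> H" for S
  proof -
    have "\<bar>m - 0\<bar> \<le> \<bar>m - c\<bar>" if "m \<in> S" for m
      using that \<open>S \<subseteq> H\<close> c unfolding H_def by auto
    thus ?thesis
      using emeasure_mb_vimage_add_mono[OF b, of S 0 c]
      by (simp add: P_def Q_def emeasure_eq_measure vimage_def)
  qed
  have "(+) c -` H = H - {0}"
    using c unfolding H_def by auto
  hence "Q H = P (H - {0})" by (simp add: P_def Q_def)
  moreover have "P H = P (H - {0}) + P {0}"
    using P_split[of H "- {0}"] by (simp add: H_def Diff_eq Int_commute)
  moreover have "P {0} = gauss_pmf b 0"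
    using emeasure_mb[of b "{0}"] gauss_pmf_pos[OF b, of 0]
    by (simp add: P_def emeasure_eq_measure)
  ultimately have H: "P H = Q H + gauss_pmf b 0" by simp
  have "P E = P (E \<inter> H) + P (E - H)" by (rule P_split)
  moreover have "P (E - H) \<le> Q (E - H)" by (rule outside) auto
  moreover have "P H = P (H \<inter> E) + P (H - E)" by (rule P_split)
  moreover have "Q (H - E) \<le> P (H - E)" by (rule inside) auto
  moreover have "Q H = Q (H \<inter> E) + Q (H - E)" by (rule Q_split)
  moreover have "Q E = Q (E \<inter> H) + Q (E - H)" by (rule Q_split)
  ultimately show ?thesis using H by (simp add: P_def Q_def Int_commute)
qed

lemma measure_mb_le_vimage_add:
  assumes b: "b > 0"
  shows "measure (mb b) E \<le> measure (mb b) ((+) c -` E) + \<bar>c\<bar> * gauss_pmf b 0"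
proof -
  obtain s k where c: "c = s * int k" and s: "s = 1 \<or> s = -1"
    by (metis int_cases2 mult_minus_left mult_1)
  have "measure (mb b) E \<le> measure (mb b) ((+) (s * int k) -` E) + real k * gauss_pmf b 0"
    for k E
  proof (induction k arbitrary: E)
    case (Suc k)
    have "measure (mb b) E \<le> measure (mb b) ((+) (s * int k) -` E) + real k * gauss_pmf b 0"
      by (rule Suc.IH)
    also have "\<dots> \<le> measure (mb b) ((+) s -` ((+) (s * int k) -` E)) + gauss_pmf b 0
        + real k * gauss_pmf b 0"
      using measure_mb_le_vimage_add_unit[OF b s] by simp
    also have "(+) s -` ((+) (s * int k) -` E) = (+) (s * int (Suc k)) -` E"
      by (auto simp: distrib_left add.assoc add.left_commute)
    finally show ?case by (simp add: distrib_right)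
  qed (simp add: vimage_def)
  thus ?thesis using s by (auto simp: c abs_mult)
qed

lemma emeasure_distr_add_mb:
  "emeasure (distr (mb b) (count_space UNIV) ((+) c)) E = emeasure (mb b) ((+) c -` E)"
  by (subst emeasure_distr) auto

lemma emeasure_mb_le_distr_add:
  assumes "b > 0"
  shows "emeasure (mb b) E \<le>
    emeasure (distr (mb b) (count_space UNIV) ((+) c)) E + ennreal (\<bar>c\<bar> * gauss_pmf b 0)"
proof -
  interpret prob_space "mb b" by (rule prob_space_mb[OF assms])
  show ?thesis
    using measure_mb_le_vimage_add[OF assms, of E c] gauss_pmf_pos[OF assms, of 0]
    by (simp add: emeasure_distr_add_mb emeasure_eq_measure ennreal_plus[symmetric]
        del: ennreal_plus)
qed

lemma emeasure_distr_add_le_mb: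
  assumes "b > 0"
  shows "emeasure (distr (mb b) (count_space UNIV) ((+) c)) E \<le>
    emeasure (mb b) E + ennreal (\<bar>c\<bar> * gauss_pmf b 0)"
proof -
  interpret prob_space "mb b" by (rule prob_space_mb[OF assms])
  have "(+) (- c) -` ((+) c -` E) = E" by auto
  thus ?thesis
    using measure_mb_le_vimage_add[OF assms, of "(+) c -` E" "- c"] gauss_pmf_pos[OF assms, of 0]
    by (simp add: emeasure_distr_add_mb emeasure_eq_measure ennreal_plus[symmetric]
        del: ennreal_plus)
qed

section \<open>Products of discrete probability measures\<close>

definition discrete_prob_family :: "'i set \<Rightarrow> ('i \<Rightarrow> 'a measure) \<Rightarrow> bool" where
  "discrete_prob_family I M \<longleftrightarrow>
     (\<forall>i. sets (M i) = sets (count_space UNIV)) \<and> (\<forall>i\<in>I. prob_space (M i))"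

abbreviation discrete_PiM :: "'i set \<Rightarrow> ('i \<Rightarrow> 'a) measure" where
  "discrete_PiM I \<equiv> PiM I (\<lambda>_. count_space UNIV)"

definition cylinder :: "'i set \<Rightarrow> 'i set \<Rightarrow> ('i \<Rightarrow> 'a) \<Rightarrow> ('i \<Rightarrow> 'a) set" where
  "cylinder I J w = {x \<in> I \<rightarrow>\<^sub>E UNIV. \<forall>j\<in>J. x j = w j}"

definition finitely_determined :: "'i set \<Rightarrow> 'i set \<Rightarrow> ('i \<Rightarrow> 'a) set \<Rightarrow> bool" where
  "finitely_determined I J E \<longleftrightarrow> finite J \<and> J \<subseteq> I \<and> E \<subseteq> I \<rightarrow>\<^sub>E UNIV \<and>
     (\<forall>x\<in>I \<rightarrow>\<^sub>E UNIV. \<forall>y\<in>I \<rightarrow>\<^sub>E UNIV. (\<forall>j\<in>J. x j = y j) \<longrightarrow> (x \<in> E \<longleftrightarrow> y \<in> E))"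

lemma discrete_prob_family_space: "discrete_prob_family I M \<Longrightarrow> space (M i) = UNIV"
  unfolding discrete_prob_family_def
  using sets_eq_imp_space_eq[of "M i" "count_space UNIV"] by auto

lemma discrete_prob_family_prob_space: "discrete_prob_family I M \<Longrightarrow> i \<in> I \<Longrightarrow> prob_space (M i)"
  by (simp add: discrete_prob_family_def)

lemma discrete_prob_family_if:
  "discrete_prob_family I M \<Longrightarrow> discrete_prob_family I N \<Longrightarrow>
     discrete_prob_family I (\<lambda>i. if P i then M i else N i)"
  by (simp add: discrete_prob_family_def)

lemma discrete_prob_family_return:
  "discrete_prob_family I (\<lambda>i. return (count_space UNIV) (v i))"
  by (simp add: discrete_prob_family_def prob_space_return)

lemma discrete_prob_family_mb:
  "\<forall>d\<in>I. \<beta> d > 0 \<Longrightarrow> discrete_prob_family I (\<lambda>d. mb (\<beta> d))"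
  by (simp add: discrete_prob_family_def prob_space_mb)

lemma sets_PiM_discrete:
  "discrete_prob_family I M \<Longrightarrow> sets (PiM I M) = sets (discrete_PiM I)"
  unfolding discrete_prob_family_def by (intro sets_PiM_cong) auto

lemma space_PiM_discrete:
  "discrete_prob_family I M \<Longrightarrow> space (PiM I M) = I \<rightarrow>\<^sub>E UNIV"
  by (simp add: space_PiM discrete_prob_family_space)

lemma prob_space_PiM_discrete: "discrete_prob_family I M \<Longrightarrow> prob_space (PiM I M)"
  unfolding discrete_prob_family_def by (intro prob_space_PiM) auto

lemma prod_emb_discrete:
  "discrete_prob_family I M \<Longrightarrow> prod_emb I M J X = prod_emb I (\<lambda>_. count_space UNIV) J X"
  unfolding prod_emb_def by (simp add: discrete_prob_family_space)

lemma cylinder_eq_prod_emb: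
  "J \<subseteq> I \<Longrightarrow> cylinder I J w = prod_emb I (\<lambda>_. count_space UNIV) J (\<Pi>\<^sub>E j\<in>J. {w j})"
  unfolding cylinder_def prod_emb_def by (auto simp: PiE_iff extensional_def)

lemma cylinder_in_sets:
  "finite J \<Longrightarrow> J \<subseteq> I \<Longrightarrow> cylinder I J w \<in> sets (discrete_PiM I)"
  by (auto simp: cylinder_eq_prod_emb intro!: sets_PiM_I)

lemma emeasure_PiM_cylinder:
  assumes "discrete_prob_family I M" "finite J" "J \<subseteq> I"
  shows "emeasure (PiM I M) (cylinder I J w) = (\<Prod>j\<in>J. emeasure (M j) {w j})"
proof -
  have "cylinder I J w = prod_emb I M J (\<Pi>\<^sub>E j\<in>J. {w j})"
    using assms by (simp add: cylinder_eq_prod_emb prod_emb_discrete)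
  thus ?thesis
    using assms by (simp add: discrete_prob_family_def emeasure_PiM_emb)
qed

lemma finitely_determined_eq_UN_cylinder:
  assumes "finitely_determined I J E"
  shows "E = (\<Union>w\<in>(\<lambda>x. restrict x J) ` E. cylinder I J w)"
proof
  show "E \<subseteq> (\<Union>w\<in>(\<lambda>x. restrict x J) ` E. cylinder I J w)"
  proof
    fix x assume "x \<in> E"
    moreover from this have "x \<in> cylinder I J (restrict x J)"
      using assms by (auto simp: finitely_determined_def cylinder_def)
    ultimately show "x \<in> (\<Union>w\<in>(\<lambda>x. restrict x J) ` E. cylinder I J w)" by blast
  qed
  show "(\<Union>w\<in>(\<lambda>x. restrict x J) ` E. cylinder I J w) \<subseteq> E"
  proof safe
    fix x y assume y: "y \<in> E" and x: "x \<in> cylinder I J (restrict y J)"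
    have "\<forall>j\<in>J. x j = y j" using x by (simp add: cylinder_def)
    thus "x \<in> E"
      using assms x y unfolding finitely_determined_def cylinder_def by blast
  qed
qed

lemma countable_restrict_image:
  "finite J \<Longrightarrow> countable ((\<lambda>x. restrict x J) ` (E :: ('i \<Rightarrow> 'a::countable) set))"
  by (rule countable_subset[of _ "J \<rightarrow>\<^sub>E UNIV"]) (auto intro: countable_PiE)

lemma disjoint_family_on_cylinder: "disjoint_family_on (cylinder I J) ((\<lambda>x. restrict x J) ` E)"
  unfolding disjoint_family_on_def
proof safe
  fix x y z
  assume "restrict x J \<noteq> restrict y J"
    and z: "z \<in> cylinder I J (restrict x J)" "z \<in> cylinder I J (restrict y J)"
  then obtain j where "j \<in> J" "x j \<noteq> y j" by (auto simp: fun_eq_iff restrict_def split: if_splits)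
  with z show "z \<in> {}" unfolding cylinder_def by auto
qed

lemma finitely_determined_in_sets:
  fixes E :: "('i \<Rightarrow> 'a::countable) set"
  assumes "finitely_determined I J E"
  shows "E \<in> sets (discrete_PiM I)"
proof -
  have "finite J" "J \<subseteq> I" using assms by (auto simp: finitely_determined_def)
  hence "(\<Union>w\<in>(\<lambda>x. restrict x J) ` E. cylinder I J w) \<in> sets (discrete_PiM I)"
    by (intro sets.countable_UN' countable_restrict_image) (auto intro: cylinder_in_sets)
  thus ?thesis using finitely_determined_eq_UN_cylinder[OF assms] by simp
qed

lemma emeasure_finitely_determined:
  fixes E :: "('i \<Rightarrow> 'a::countable) set"
  assumes "finitely_determined I J E" "sets N = sets (discrete_PiM I)"
  shows "emeasure N E =
    (\<integral>\<^sup>+ w. emeasure N (cylinder I J w) \<partial>count_space ((\<lambda>x. restrict x J) ` E))"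
proof -
  have J: "finite J" "J \<subseteq> I" using assms by (auto simp: finitely_determined_def)
  have "emeasure N E = emeasure N (\<Union>w\<in>(\<lambda>x. restrict x J) ` E. cylinder I J w)"
    using finitely_determined_eq_UN_cylinder[OF assms(1)] by simp
  also have "\<dots> = (\<integral>\<^sup>+ w. emeasure N (cylinder I J w) \<partial>count_space ((\<lambda>x. restrict x J) ` E))"
    using J assms(2)
    by (intro emeasure_UN_countable countable_restrict_image disjoint_family_on_cylinder)
      (auto intro: cylinder_in_sets)
  finally show ?thesis .
qed

lemma emeasure_PiM_finitely_determined_cong:
  fixes E :: "('i \<Rightarrow> 'a::countable) set"
  assumes "discrete_prob_family I M" "discrete_prob_family I M'" "finitely_determined I J E"
    and "\<And>j. j \<in> J \<Longrightarrow> M j = M' j"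
  shows "emeasure (PiM I M) E = emeasure (PiM I M') E"
proof -
  have J: "finite J" "J \<subseteq> I" using assms by (auto simp: finitely_determined_def)
  show ?thesis
    using assms J
    by (simp add: emeasure_finitely_determined[OF assms(3)] sets_PiM_discrete emeasure_PiM_cylinder)
qed

lemma finitely_determined_prod_emb:
  fixes X :: "'i \<Rightarrow> 'a set"
  assumes "finite J" "J \<subseteq> I"
  shows "finitely_determined I J (prod_emb I (\<lambda>_. count_space UNIV) J (Pi\<^sub>E J X))"
  unfolding finitely_determined_def
proof (intro conjI ballI impI assms)
  show "prod_emb I (\<lambda>_. count_space UNIV) J (Pi\<^sub>E J X) \<subseteq> I \<rightarrow>\<^sub>E UNIV"
    by (auto simp: prod_emb_def)
  fix x y :: "'i \<Rightarrow> 'a"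
  assume "x \<in> I \<rightarrow>\<^sub>E UNIV" "y \<in> I \<rightarrow>\<^sub>E UNIV" "\<forall>j\<in>J. x j = y j"
  moreover from this have "restrict x J = restrict y J" by auto
  ultimately show "x \<in> prod_emb I (\<lambda>_. count_space UNIV) J (Pi\<^sub>E J X) \<longleftrightarrow>
      y \<in> prod_emb I (\<lambda>_. count_space UNIV) J (Pi\<^sub>E J X)"
    by (simp add: prod_emb_def)
qed

lemma finitely_determined_space:
  "finite J \<Longrightarrow> J \<subseteq> I \<Longrightarrow> finitely_determined I J (I \<rightarrow>\<^sub>E UNIV)"
  unfolding finitely_determined_def by auto

lemma finitely_determined_Compl:
  "finitely_determined I J E \<Longrightarrow> finitely_determined I J ((I \<rightarrow>\<^sub>E UNIV) - E)"
  unfolding finitely_determined_def by blast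

lemma finitely_determined_UN:
  fixes E :: "'n \<Rightarrow> ('i \<Rightarrow> 'a) set"
  assumes "finite K" "\<And>n. n \<in> K \<Longrightarrow> finitely_determined I (J n) (E n)"
  shows "finitely_determined I (\<Union>n\<in>K. J n) (\<Union>n\<in>K. E n)"
  unfolding finitely_determined_def
proof (intro conjI ballI impI)
  show "finite (\<Union>n\<in>K. J n)" "(\<Union>n\<in>K. J n) \<subseteq> I" "(\<Union>n\<in>K. E n) \<subseteq> I \<rightarrow>\<^sub>E UNIV"
    using assms unfolding finitely_determined_def by fast+
  fix x y :: "'i \<Rightarrow> 'a"
  assume "x \<in> I \<rightarrow>\<^sub>E UNIV" "y \<in> I \<rightarrow>\<^sub>E UNIV" "\<forall>j\<in>\<Union>n\<in>K. J n. x j = y j"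
  hence "x \<in> E n \<longleftrightarrow> y \<in> E n" if "n \<in> K" for n
    using assms(2)[OF that] that unfolding finitely_determined_def by blast
  thus "x \<in> (\<Union>n\<in>K. E n) \<longleftrightarrow> y \<in> (\<Union>n\<in>K. E n)" by blast
qed

section \<open>Comparing product measures\<close>

lemma emeasure_PiM_eq_pair_measure:
  fixes M :: "'i \<Rightarrow> 'a measure"
  assumes M: "discrete_prob_family I M" and i: "i \<in> I" and E: "E \<in> sets (discrete_PiM I)"
  defines "G \<equiv> (\<lambda>(x, X). X(i := x)) -` E \<inter> (UNIV \<times> space (PiM (I - {i}) M))"
  shows "G \<in> sets (M i \<Otimes>\<^sub>M PiM (I - {i}) M)"
    and "emeasure (PiM I M) E = emeasure (M i \<Otimes>\<^sub>M PiM (I - {i}) M) G"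
proof -
  have I: "insert i (I - {i}) = I" "i \<notin> I - {i}" using i by auto
  define upd where "upd = (\<lambda>(x, X :: 'i \<Rightarrow> 'a). X(i := x))"
  have upd: "upd \<in> measurable (M i \<Otimes>\<^sub>M PiM (I - {i}) M) (PiM I M)"
    unfolding upd_def split_beta' by (rule measurable_fun_upd[where J = "I - {i}"]) (use I in auto)
  have E_M: "E \<in> sets (PiM I M)" using E by (simp add: sets_PiM_discrete[OF M])
  have G: "G = upd -` E \<inter> space (M i \<Otimes>\<^sub>M PiM (I - {i}) M)"
    by (simp add: G_def upd_def space_pair_measure discrete_prob_family_space[OF M])
  show "G \<in> sets (M i \<Otimes>\<^sub>M PiM (I - {i}) M)"
    unfolding G using upd E_M by (rule measurable_sets)
  have "distr (M i \<Otimes>\<^sub>M PiM (I - {i}) M) (PiM I M) upd = PiM I M"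
    using distr_pair_PiM_eq_PiM[of "I - {i}" M i] M I unfolding upd_def
    by (auto simp: discrete_prob_family_def)
  thus "emeasure (PiM I M) E = emeasure (M i \<Otimes>\<^sub>M PiM (I - {i}) M) G"
    unfolding G by (metis emeasure_distr[OF upd E_M])
qed

lemma emeasure_PiM_le_single_coordinate:
  fixes M N :: "'i \<Rightarrow> 'a measure"
  assumes M: "discrete_prob_family I M" and N: "discrete_prob_family I N" and i: "i \<in> I"
    and eq: "\<And>j. j \<in> I \<Longrightarrow> j \<noteq> i \<Longrightarrow> M j = N j"
    and le: "\<And>E. emeasure (M i) E \<le> emeasure (N i) E + \<delta>"
    and E: "E \<in> sets (discrete_PiM I)"
  shows "emeasure (PiM I M) E \<le> emeasure (PiM I N) E + \<delta>"
proof -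
  define R where "R = PiM (I - {i}) M"
  have R_N: "PiM (I - {i}) N = R" unfolding R_def by (rule PiM_cong) (auto simp: eq)
  define G where "G = (\<lambda>(x, X). X(i := x)) -` E \<inter> (UNIV \<times> space R)"
  have G_M: "G \<in> sets (M i \<Otimes>\<^sub>M R)" and M_eq: "emeasure (PiM I M) E = emeasure (M i \<Otimes>\<^sub>M R) G"
    using emeasure_PiM_eq_pair_measure[OF M i E] unfolding G_def R_def by simp_all
  have G_N: "G \<in> sets (N i \<Otimes>\<^sub>M R)" and N_eq: "emeasure (PiM I N) E = emeasure (N i \<Otimes>\<^sub>M R) G"
    using emeasure_PiM_eq_pair_measure[OF N i E] unfolding G_def R_N by simp_all
  interpret R: prob_space R
    unfolding R_def using M by (intro prob_space_PiM) (auto simp: discrete_prob_family_def)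
  interpret Mi: prob_space "M i" using M i by (rule discrete_prob_family_prob_space)
  interpret Ni: prob_space "N i" using N i by (rule discrete_prob_family_prob_space)
  interpret MR: pair_sigma_finite "M i" R ..
  interpret NR: pair_sigma_finite "N i" R ..
  have "emeasure (PiM I M) E = (\<integral>\<^sup>+y. emeasure (M i) ((\<lambda>x. (x, y)) -` G) \<partial>R)"
    by (simp add: M_eq MR.emeasure_pair_measure_alt2[OF G_M])
  also have "\<dots> \<le> (\<integral>\<^sup>+y. emeasure (N i) ((\<lambda>x. (x, y)) -` G) + \<delta> \<partial>R)"
    by (intro nn_integral_mono le)
  also have "\<dots> = (\<integral>\<^sup>+y. emeasure (N i) ((\<lambda>x. (x, y)) -` G) \<partial>R) + \<delta>"
    using G_N by (subst nn_integral_add)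
      (auto simp: R.emeasure_space_1 intro!: NR.measurable_emeasure_Pair2)
  also have "\<dots> = emeasure (PiM I N) E + \<delta>"
    by (simp add: N_eq NR.emeasure_pair_measure_alt2[OF G_N])
  finally show ?thesis .
qed

lemma emeasure_PiM_le_finite_coordinates:
  assumes "finite S" "S \<subseteq> I"
    and "discrete_prob_family I M" "discrete_prob_family I N"
    and "\<And>j. j \<in> I - S \<Longrightarrow> M j = N j"
    and "\<And>i E. i \<in> S \<Longrightarrow> emeasure (M i) E \<le> emeasure (N i) E + ennreal (\<delta> i)"
    and "\<And>i. i \<in> S \<Longrightarrow> \<delta> i \<ge> 0"
    and "E \<in> sets (discrete_PiM I)"
  shows "emeasure (PiM I M) E \<le> emeasure (PiM I N) E + ennreal (sum \<delta> S)"
  using assms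
proof (induction S arbitrary: M rule: finite_induct)
  case empty
  have "PiM I M = PiM I N" using empty by (intro PiM_cong) auto
  thus ?case by simp
next
  case (insert s S)
  define M' where "M' = (\<lambda>j. if j = s then N s else M j)"
  have M': "discrete_prob_family I M'"
    using "insert.prems"(2,3) unfolding M'_def discrete_prob_family_def by auto
  have "emeasure (PiM I M) E \<le> emeasure (PiM I M') E + ennreal (\<delta> s)"
    using "insert.prems"
    by (intro emeasure_PiM_le_single_coordinate[OF _ M', where i = s]) (auto simp: M'_def)
  also have "\<dots> \<le> emeasure (PiM I N) E + ennreal (sum \<delta> S) + ennreal (\<delta> s)"
    using "insert.prems" "insert.hyps"
    by (intro add_right_mono "insert.IH"[OF _ M']) (auto simp: M'_def)
  also have "\<dots> = emeasure (PiM I N) E + (ennreal (sum \<delta> S) + ennreal (\<delta> s))"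
    by (simp only: add.assoc)
  also have "ennreal (sum \<delta> S) + ennreal (\<delta> s) = ennreal (sum \<delta> (insert s S))"
    using "insert.prems" "insert.hyps" by (simp add: sum_nonneg add.commute)
  finally show ?case .
qed

lemma (in finite_measure) measure_le_sym_diff:
  assumes "A \<in> sets M" "B \<in> sets M"
  shows "measure M A \<le> measure M B + measure M (sym_diff A B)"
proof -
  have "measure M A \<le> measure M (B \<union> sym_diff A B)"
    using assms by (intro finite_measure_mono) auto
  also have "\<dots> \<le> measure M B + measure M (sym_diff A B)"
    using assms by (intro measure_Un_le) auto
  finally show ?thesis .
qed

lemma (in finite_measure) measure_sym_diff_UN_le:
  fixes A B :: "nat \<Rightarrow> 'a set"
  assumes "range A \<subseteq> sets M" "range B \<subseteq> sets M"
  shows "measure M (sym_diff (\<Union>n. A n) (\<Union>n<m. B n)) \<le>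
    measure M (\<Union>n. A n) - measure M (\<Union>n<m. A n) + (\<Sum>n<m. measure M (sym_diff (A n) (B n)))"
proof -
  have sets: "(\<Union>n. A n) \<in> sets M" "(\<Union>n<m. A n) \<in> sets M" "\<And>n. sym_diff (A n) (B n) \<in> sets M"
    using assms by (auto intro!: sets.countable_UN')
  hence "(\<Union>n<m. sym_diff (A n) (B n)) \<in> sets M" by (intro sets.finite_UN) auto
  note sets = sets this
  have "measure M (sym_diff (\<Union>n. A n) (\<Union>n<m. B n)) \<le>
      measure M (((\<Union>n. A n) - (\<Union>n<m. A n)) \<union> (\<Union>n<m. sym_diff (A n) (B n)))"
    using sets by (intro finite_measure_mono) auto
  also have "\<dots> \<le> measure M ((\<Union>n. A n) - (\<Union>n<m. A n)) + measure M (\<Union>n<m. sym_diff (A n) (B n))"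
    using assms by (intro measure_Un_le) auto
  also have "measure M ((\<Union>n. A n) - (\<Union>n<m. A n)) = measure M (\<Union>n. A n) - measure M (\<Union>n<m. A n)"
    using assms by (intro finite_measure_Diff) auto
  also have "measure M (\<Union>n<m. sym_diff (A n) (B n)) \<le> (\<Sum>n<m. measure M (sym_diff (A n) (B n)))"
    using assms by (intro finite_measure_subadditive_finite) auto
  finally show ?thesis by simp
qed

lemma (in finite_measure) eventually_measure_UN_lessThan:
  fixes A :: "nat \<Rightarrow> 'a set"
  assumes "range A \<subseteq> sets M" "e > 0"
  shows "eventually (\<lambda>m. measure M (\<Union>n. A n) - measure M (\<Union>n<m. A n) < e) sequentially"
proof -
  have "(\<lambda>m. measure M (\<Union>n<m. A n)) \<longlonglongrightarrow> measure M (\<Union>m. \<Union>n<m. A n)"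
    using assms by (intro finite_Lim_measure_incseq) (force simp: incseq_def intro: less_le_trans)+
  moreover have "(\<Union>m. \<Union>n<m. A n) = (\<Union>n. A n)" by blast
  ultimately show ?thesis
    using assms(2) by (auto dest!: tendstoD simp: dist_real_def elim!: eventually_mono)
qed

definition finitely_approximable ::
    "'i set \<Rightarrow> ('i \<Rightarrow> 'a) measure \<Rightarrow> ('i \<Rightarrow> 'a) measure \<Rightarrow> ('i \<Rightarrow> 'a) set \<Rightarrow> bool" where
  "finitely_approximable I N1 N2 E \<longleftrightarrow> (\<forall>e>0. \<exists>J E'. finitely_determined I J E' \<and>
     measure N1 (sym_diff E E') < e \<and> measure N2 (sym_diff E E') < e)"

lemma finitely_approximable_UN:
  fixes A :: "nat \<Rightarrow> ('i \<Rightarrow> 'a::countable) set"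
  assumes N1: "finite_measure N1" "sets N1 = sets (discrete_PiM I)"
    and N2: "finite_measure N2" "sets N2 = sets (discrete_PiM I)"
    and A: "range A \<subseteq> sets (discrete_PiM I)" and approx: "\<And>n. finitely_approximable I N1 N2 (A n)"
  shows "finitely_approximable I N1 N2 (\<Union>n. A n)"
  unfolding finitely_approximable_def
proof (intro allI impI)
  interpret N1: finite_measure N1 by fact
  interpret N2: finite_measure N2 by fact
  fix e :: real assume e: "e > 0"
  obtain m where
    m: "measure N1 (\<Union>n. A n) - measure N1 (\<Union>n<m. A n) < e / 2"
       "measure N2 (\<Union>n. A n) - measure N2 (\<Union>n<m. A n) < e / 2"
    using eventually_conj[OF N1.eventually_measure_UN_lessThan N2.eventually_measure_UN_lessThan,
        of A "e / 2" A "e / 2"] A N1(2) N2(2) e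
    by (auto simp: eventually_sequentially)
  define e' where "e' = e / (2 * (real m + 1))"
  have "e' > 0" using e by (simp add: e'_def)
  hence "\<forall>n. \<exists>J E'. finitely_determined I J E' \<and>
      measure N1 (sym_diff (A n) E') < e' \<and> measure N2 (sym_diff (A n) E') < e'"
    using approx unfolding finitely_approximable_def by blast
  then obtain J B where B: "\<And>n. finitely_determined I (J n) (B n)"
    "\<And>n. measure N1 (sym_diff (A n) (B n)) < e'" "\<And>n. measure N2 (sym_diff (A n) (B n)) < e'"
    by metis
  have sets: "range A \<subseteq> sets N1" "range B \<subseteq> sets N1" "range A \<subseteq> sets N2" "range B \<subseteq> sets N2"
    using A finitely_determined_in_sets[OF B(1)] N1(2) N2(2) by auto
  have "real m * e' < e / 2"
    using e by (simp add: e'_def field_simps)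
  hence "(\<Sum>n<m. measure N (sym_diff (A n) (B n))) < e / 2"
    if "\<And>n. measure N (sym_diff (A n) (B n)) < e'" for N :: "('i \<Rightarrow> 'a) measure"
    using sum_mono[of "{..<m}" "\<lambda>n. measure N (sym_diff (A n) (B n))" "\<lambda>_. e'"] that
    by (simp add: less_imp_le)
  hence "measure N1 (sym_diff (\<Union>n. A n) (\<Union>n<m. B n)) < e"
    "measure N2 (sym_diff (\<Union>n. A n) (\<Union>n<m. B n)) < e"
    using N1.measure_sym_diff_UN_le[OF sets(1,2), of m]
      N2.measure_sym_diff_UN_le[OF sets(3,4), of m] m B(2,3)
    by fastforce+
  moreover have "finitely_determined I (\<Union>n<m. J n) (\<Union>n<m. B n)"
    using B(1) by (intro finitely_determined_UN) auto
  ultimately show "\<exists>J E'. finitely_determined I J E' \<and>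
      measure N1 (sym_diff (\<Union>n. A n) E') < e \<and> measure N2 (sym_diff (\<Union>n. A n) E') < e"
    by blast
qed

lemma finitely_approximable_sets:
  fixes E :: "('i \<Rightarrow> 'a::countable) set"
  assumes N1: "finite_measure N1" "sets N1 = sets (discrete_PiM I)"
    and N2: "finite_measure N2" "sets N2 = sets (discrete_PiM I)"
    and E: "E \<in> sets (discrete_PiM I)"
  shows "finitely_approximable I N1 N2 E"
proof -
  interpret N1: finite_measure N1 by fact
  interpret N2: finite_measure N2 by fact
  have "E \<in> sigma_sets (I \<rightarrow>\<^sub>E UNIV) (prod_algebra I (\<lambda>_. count_space UNIV))"
    using E by (simp add: sets_PiM)
  thus ?thesis
  proof (induction rule: sigma_sets.induct)
    case (Basic S)
    then obtain J X where "S = prod_emb I (\<lambda>_. count_space UNIV) J (Pi\<^sub>E J X)" "finite J" "J \<subseteq> I"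
      by (auto elim!: prod_algebraE)
    hence "finitely_determined I J S" by (simp add: finitely_determined_prod_emb)
    thus ?case unfolding finitely_approximable_def by force
  next
    case Empty
    have "finitely_determined I {} {}" by (simp add: finitely_determined_def)
    thus ?case unfolding finitely_approximable_def by force
  next
    case (Compl S)
    have "S \<subseteq> I \<rightarrow>\<^sub>E UNIV"
      using sigma_sets_into_sp[OF _ Compl.hyps] prod_algebra_sets_into_space[of I] by auto
    hence "sym_diff ((I \<rightarrow>\<^sub>E UNIV) - S) ((I \<rightarrow>\<^sub>E UNIV) - E') = sym_diff S E'"
      if "finitely_determined I J E'" for J E'
      using that unfolding finitely_determined_def by blast
    thus ?case
      using Compl.IH finitely_determined_Compl unfolding finitely_approximable_def by metis
  next
    case (Union A)
    have "range A \<subseteq> sets (discrete_PiM I)" using Union.hyps by (auto simp: sets_PiM)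
    thus ?case by (rule finitely_approximable_UN[OF N1 N2 _ Union.IH])
  qed
qed

text \<open>Approximate \<open>E\<close> by a finitely determined event, on which only finitely many factors
  matter.\<close>
lemma measure_PiM_le_coordinatewise:
  fixes M N :: "'i \<Rightarrow> 'a::countable measure"
  assumes M: "discrete_prob_family I M" and N: "discrete_prob_family I N"
    and le: "\<And>i E. i \<in> I \<Longrightarrow> emeasure (M i) E \<le> emeasure (N i) E + ennreal (\<delta> i)"
    and nonneg: "\<And>i. i \<in> I \<Longrightarrow> \<delta> i \<ge> 0"
    and bound: "\<And>J. finite J \<Longrightarrow> J \<subseteq> I \<Longrightarrow> sum \<delta> J \<le> D"
    and E: "E \<in> sets (discrete_PiM I)"
  shows "measure (PiM I M) E \<le> measure (PiM I N) E + D"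
proof (rule field_le_epsilon)
  interpret PM: prob_space "PiM I M" by (rule prob_space_PiM_discrete[OF M])
  interpret PN: prob_space "PiM I N" by (rule prob_space_PiM_discrete[OF N])
  fix e :: real assume "e > 0"
  then obtain J E' where E': "finitely_determined I J E'"
    "measure (PiM I M) (sym_diff E E') < e / 2" "measure (PiM I N) (sym_diff E E') < e / 2"
    using finitely_approximable_sets[OF PM.finite_measure_axioms _ PN.finite_measure_axioms _ E]
    unfolding finitely_approximable_def sets_PiM_discrete[OF M] sets_PiM_discrete[OF N]
    by (meson half_gt_zero)
  have J: "finite J" "J \<subseteq> I" using E' by (auto simp: finitely_determined_def)
  have sets: "E \<in> sets (PiM I M)" "E' \<in> sets (PiM I M)" "E \<in> sets (PiM I N)" "E' \<in> sets (PiM I N)"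
    using E finitely_determined_in_sets[OF E'(1)]
    by (simp_all add: sets_PiM_discrete[OF M] sets_PiM_discrete[OF N])
  define M' where "M' j = (if j \<in> J then M j else N j)" for j
  have M': "discrete_prob_family I M'"
    unfolding M'_def by (intro discrete_prob_family_if M N)
  have "emeasure (PiM I M) E' = emeasure (PiM I M') E'"
    by (rule emeasure_PiM_finitely_determined_cong[OF M M' E'(1)]) (simp add: M'_def)
  also have "\<dots> \<le> emeasure (PiM I N) E' + ennreal (sum \<delta> J)"
    using J le nonneg finitely_determined_in_sets[OF E'(1)]
    by (intro emeasure_PiM_le_finite_coordinates[OF J M' N]) (auto simp: M'_def)
  finally have "measure (PiM I M) E' \<le> measure (PiM I N) E' + sum \<delta> J"
    using nonneg J
    by (simp add: PM.emeasure_eq_measure PN.emeasure_eq_measure ennreal_plus[symmetric] sum_nonneg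
        subset_iff del: ennreal_plus)
  moreover have "sum \<delta> J \<le> D" using bound J .
  moreover have "measure (PiM I M) E \<le> measure (PiM I M) E' + measure (PiM I M) (sym_diff E E')"
    using sets by (intro PM.measure_le_sym_diff) auto
  moreover have "measure (PiM I N) E' \<le> measure (PiM I N) E + measure (PiM I N) (sym_diff E' E)"
    using sets by (intro PN.measure_le_sym_diff) auto
  ultimately show "measure (PiM I M) E \<le> measure (PiM I N) E + D + e"
    using E'(2,3) by (simp add: Un_commute)
qed

lemma abs_measure_PiM_diff_le:
  fixes M N :: "'i \<Rightarrow> 'a::countable measure"
  assumes M: "discrete_prob_family I M" and N: "discrete_prob_family I N"
    and "\<And>i E. i \<in> I \<Longrightarrow> emeasure (M i) E \<le> emeasure (N i) E + ennreal (\<delta> i)"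
    and "\<And>i E. i \<in> I \<Longrightarrow> emeasure (N i) E \<le> emeasure (M i) E + ennreal (\<delta> i)"
    and "\<And>i. i \<in> I \<Longrightarrow> \<delta> i \<ge> 0"
    and "\<And>J. finite J \<Longrightarrow> J \<subseteq> I \<Longrightarrow> sum \<delta> J \<le> D"
    and "E \<in> sets (discrete_PiM I)"
  shows "\<bar>measure (PiM I M) E - measure (PiM I N) E\<bar> \<le> D"
  using measure_PiM_le_coordinatewise[OF M N, of \<delta> D E]
    measure_PiM_le_coordinatewise[OF N M, of \<delta> D E] assms
  by (simp add: abs_le_iff)

section \<open>Coordinatewise maps, conditioning and a zero-one law\<close>

lemma measurable_discrete_prob_family:
  "discrete_prob_family I M \<Longrightarrow> f \<in> measurable (M i) (count_space UNIV)"
  by (subst measurable_cong_sets[where M' = "count_space UNIV" and N' = "count_space UNIV"])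
    (auto simp: discrete_prob_family_def)

lemma measurable_coordinatewise:
  assumes "discrete_prob_family I M"
  shows "(\<lambda>x. restrict (\<lambda>i. f i (x i)) I) \<in> measurable (PiM I M) (discrete_PiM I)"
proof (rule measurable_restrict)
  fix i assume "i \<in> I"
  moreover have "f i \<in> measurable (M i) (count_space UNIV)"
    using assms by (rule measurable_discrete_prob_family)
  ultimately show "(\<lambda>x. f i (x i)) \<in> measurable (PiM I M) (count_space UNIV)"
    by (intro measurable_compose[OF measurable_component_singleton])
qed

lemma discrete_prob_family_distr:
  "discrete_prob_family I M \<Longrightarrow> discrete_prob_family I (\<lambda>i. distr (M i) (count_space UNIV) (f i))"
  using measurable_discrete_prob_family[of I M]
  by (auto simp: discrete_prob_family_def intro!: prob_space.prob_space_distr)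

lemma distr_PiM_coordinatewise:
  assumes M: "discrete_prob_family I M"
  shows "distr (PiM I M) (discrete_PiM I) (\<lambda>x. restrict (\<lambda>i. f i (x i)) I) =
    PiM I (\<lambda>i. distr (M i) (count_space UNIV) (f i))"
    (is "?L = ?R")
proof (rule measure_eqI_PiM_infinite)
  have R: "discrete_prob_family I (\<lambda>i. distr (M i) (count_space UNIV) (f i))"
    by (rule discrete_prob_family_distr[OF M])
  show "sets ?L = sets (discrete_PiM I)" "sets ?R = sets (discrete_PiM I)"
    by (simp_all add: sets_PiM_discrete[OF R])
  interpret prob_space "PiM I M" by (rule prob_space_PiM_discrete[OF M])
  show "finite_measure ?L"
    by (intro prob_space.finite_measure prob_space_distr measurable_coordinatewise M)
  fix A J assume J: "finite J" "J \<subseteq> I"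
  have "(\<lambda>x. restrict (\<lambda>i. f i (x i)) I) -` prod_emb I (\<lambda>_. count_space UNIV) J (Pi\<^sub>E J A)
      \<inter> space (PiM I M) = prod_emb I M J (\<Pi>\<^sub>E j\<in>J. f j -` A j)"
    using J(2)
    by (auto simp: space_PiM_discrete[OF M] prod_emb_discrete[OF M] prod_emb_def PiE_iff
        discrete_prob_family_space[OF M] extensional_def subset_iff)
  hence "emeasure ?L (prod_emb I (\<lambda>_. count_space UNIV) J (Pi\<^sub>E J A)) =
      emeasure (PiM I M) (prod_emb I M J (\<Pi>\<^sub>E j\<in>J. f j -` A j))"
    using J by (simp add: emeasure_distr[OF measurable_coordinatewise[OF M]] sets_PiM_I)
  also have "\<dots> = (\<Prod>j\<in>J. emeasure (M j) (f j -` A j))"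
    using M J by (intro emeasure_PiM_emb) (auto simp: discrete_prob_family_def)
  also have "\<dots> = (\<Prod>j\<in>J. emeasure (distr (M j) (count_space UNIV) (f j)) (A j))"
    using M by (intro prod.cong refl)
      (simp add: emeasure_distr measurable_discrete_prob_family discrete_prob_family_space
        vimage_def)
  also have "\<dots> = emeasure ?R (prod_emb I (\<lambda>_. count_space UNIV) J (Pi\<^sub>E J A))"
    using R J
    by (simp add: prod_emb_discrete[OF R, symmetric] discrete_prob_family_def emeasure_PiM_emb)
  finally show "emeasure ?L (prod_emb I (\<lambda>_. count_space UNIV) J (Pi\<^sub>E J A)) =
      emeasure ?R (prod_emb I (\<lambda>_. count_space UNIV) J (Pi\<^sub>E J A))" .
qed

text \<open>\<open>PiM I (pinned F v M)\<close> is the conditional distribution of \<open>PiM I M\<close> given \<open>x|\<^sub>F = v\<close>.\<close>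
definition pinned :: "'i set \<Rightarrow> ('i \<Rightarrow> 'a) \<Rightarrow> ('i \<Rightarrow> 'a measure) \<Rightarrow> 'i \<Rightarrow> 'a measure" where
  "pinned F v M i = (if i \<in> F then return (count_space UNIV) (v i) else M i)"

lemma discrete_prob_family_pinned:
  "discrete_prob_family I M \<Longrightarrow> discrete_prob_family I (pinned F v M)"
  unfolding pinned_def[abs_def] by (intro discrete_prob_family_if discrete_prob_family_return)

lemma emeasure_PiM_cylinder_Int_prod_emb:
  fixes M :: "'i \<Rightarrow> 'a measure" and A :: "'i \<Rightarrow> 'a set"
  assumes M: "discrete_prob_family I M" and F: "finite F" "F \<subseteq> I" and J: "finite J" "J \<subseteq> I"
  defines "X \<equiv> prod_emb I (\<lambda>_. count_space UNIV) J (Pi\<^sub>E J A)"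
  shows "emeasure (PiM I M) (cylinder I F v \<inter> X) =
    (\<Prod>j\<in>F. emeasure (M j) {v j}) * emeasure (PiM I (pinned F v M)) X"
proof -
  have M_v: "discrete_prob_family I (pinned F v M)" by (rule discrete_prob_family_pinned[OF M])
  define A' where "A' j = (if j \<in> J then A j else UNIV) \<inter> (if j \<in> F then {v j} else UNIV)" for j
  have "cylinder I F v \<inter> X = prod_emb I M (J \<union> F) (Pi\<^sub>E (J \<union> F) A')"
    using J(2) F(2)
    by (auto simp: cylinder_def X_def A'_def prod_emb_iff restrict_PiE_iff PiE_iff
        discrete_prob_family_space[OF M]) (force split: if_splits)+
  hence "emeasure (PiM I M) (cylinder I F v \<inter> X) = (\<Prod>j\<in>J \<union> F. emeasure (M j) (A' j))"
    using M J F by (simp add: discrete_prob_family_def emeasure_PiM_emb)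
  also have "\<dots> = (\<Prod>j\<in>J \<union> F. (if j \<in> F then emeasure (M j) {v j} else 1) *
      (if j \<in> J then emeasure (pinned F v M j) (A j) else 1))"
    by (intro prod.cong refl) (auto simp: A'_def pinned_def indicator_def)
  also have "\<dots> = (\<Prod>j\<in>F. emeasure (M j) {v j}) * emeasure (PiM I (pinned F v M)) X"
    using M_v J F
    by (simp add: prod.distrib prod.inter_restrict[symmetric] X_def Int_absorb1 Int_absorb2
        prod_emb_discrete[OF M_v, symmetric] discrete_prob_family_def emeasure_PiM_emb)
  finally show ?thesis .
qed

lemma emeasure_PiM_Int_cylinder:
  fixes M :: "'i \<Rightarrow> 'a measure"
  assumes M: "discrete_prob_family I M" and F: "finite F" "F \<subseteq> I"
    and E: "E \<in> sets (discrete_PiM I)"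
  shows "emeasure (PiM I M) (E \<inter> cylinder I F v) =
    emeasure (PiM I M) (cylinder I F v) * emeasure (PiM I (pinned F v M)) E"
proof -
  define c where "c = (\<Prod>j\<in>F. emeasure (M j) {v j})"
  have M_v: "discrete_prob_family I (pinned F v M)" by (rule discrete_prob_family_pinned[OF M])
  interpret PM: prob_space "PiM I M" by (rule prob_space_PiM_discrete[OF M])
  have cyl: "cylinder I F v \<in> sets (PiM I M)"
    using cylinder_in_sets[OF F] by (simp add: sets_PiM_discrete[OF M])
  have "density (PiM I M) (indicator (cylinder I F v)) = density (PiM I (pinned F v M)) (\<lambda>_. c)"
  proof (rule measure_eqI_PiM_infinite)
    show "sets (density (PiM I M) (indicator (cylinder I F v))) = sets (discrete_PiM I)"
      "sets (density (PiM I (pinned F v M)) (\<lambda>_. c)) = sets (discrete_PiM I)"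
      by (simp_all add: sets_PiM_discrete[OF M] sets_PiM_discrete[OF M_v])
    show "finite_measure (density (PiM I M) (indicator (cylinder I F v)))"
      by (intro finite_measureI) (simp add: emeasure_restricted[OF cyl] PM.emeasure_eq_measure)
    fix A :: "'i \<Rightarrow> 'a set" and J assume J: "finite J" "J \<subseteq> I"
    have "prod_emb I (\<lambda>_. count_space UNIV) J (Pi\<^sub>E J A) \<in> sets (PiM I M)"
      using J by (simp add: sets_PiM_I sets_PiM_discrete[OF M])
    thus "emeasure (density (PiM I M) (indicator (cylinder I F v)))
        (prod_emb I (\<lambda>_. count_space UNIV) J (Pi\<^sub>E J A)) =
      emeasure (density (PiM I (pinned F v M)) (\<lambda>_. c))
        (prod_emb I (\<lambda>_. count_space UNIV) J (Pi\<^sub>E J A))"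
      using cyl emeasure_PiM_cylinder_Int_prod_emb[OF M F J, of v A]
      by (simp add: emeasure_restricted emeasure_density_const c_def sets_PiM_discrete[OF M_v]
          sets_PiM_discrete[OF M])
  qed
  hence "emeasure (PiM I M) (cylinder I F v \<inter> E) = c * emeasure (PiM I (pinned F v M)) E"
    using E cyl emeasure_restricted[OF cyl, of E]
      emeasure_density_const[of E "PiM I (pinned F v M)" c]
    by (simp add: sets_PiM_discrete[OF M] sets_PiM_discrete[OF M_v])
  thus ?thesis
    using M F by (simp add: Int_commute c_def emeasure_PiM_cylinder)
qed

lemma emeasure_Int_finitely_determined:
  fixes M :: "'i \<Rightarrow> 'a::countable measure"
  assumes M: "discrete_prob_family I M" and A: "A \<in> sets (discrete_PiM I)"
    and cyl: "\<And>w. emeasure (PiM I M) (A \<inter> cylinder I J w) = emeasure (PiM I M) (cylinder I J w) * c"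
    and X: "finitely_determined I J X"
  shows "emeasure (PiM I M) (A \<inter> X) = emeasure (PiM I M) X * emeasure (PiM I M) A"
proof -
  interpret prob_space "PiM I M" by (rule prob_space_PiM_discrete[OF M])
  have J: "finite J" "J \<subseteq> I" using X by (auto simp: finitely_determined_def)
  define N where "N = density (PiM I M) (indicator A)"
  have sets_N: "sets N = sets (discrete_PiM I)" by (simp add: N_def sets_PiM_discrete[OF M])
  have N: "emeasure N Y = emeasure (PiM I M) (A \<inter> Y)" if "Y \<in> sets (discrete_PiM I)" for Y
    unfolding N_def using A that
    by (intro emeasure_restricted) (simp_all add: sets_PiM_discrete[OF M])
  have c: "emeasure (PiM I M) (A \<inter> Y) = emeasure (PiM I M) Y * c"
    if Y: "finitely_determined I J Y" for Y
  proof -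
    have "emeasure (PiM I M) (A \<inter> Y) = emeasure N Y"
      using N finitely_determined_in_sets[OF Y] by simp
    also have "\<dots> = (\<integral>\<^sup>+ w. emeasure N (cylinder I J w) \<partial>count_space ((\<lambda>x. restrict x J) ` Y))"
      by (rule emeasure_finitely_determined[OF Y sets_N])
    also have "\<dots> =
        (\<integral>\<^sup>+ w. emeasure (PiM I M) (cylinder I J w) * c \<partial>count_space ((\<lambda>x. restrict x J) ` Y))"
      using J by (intro nn_integral_cong) (simp add: N cylinder_in_sets cyl)
    also have "\<dots> = emeasure (PiM I M) Y * c"
      by (simp add: nn_integral_multc emeasure_finitely_determined[OF Y sets_PiM_discrete[OF M]])
    finally show ?thesis .
  qed
  have "A \<subseteq> I \<rightarrow>\<^sub>E UNIV"
    using sets.sets_into_space[OF A] by (simp add: space_PiM)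
  hence "emeasure (PiM I M) A = c"
    using c[OF finitely_determined_space[OF J]] emeasure_space_1
    by (simp add: space_PiM_discrete[OF M] Int_absorb2)
  thus ?thesis using c[OF X] by simp
qed

lemma emeasure_PiM_zero_one:
  fixes M :: "'i \<Rightarrow> 'a::countable measure"
  assumes M: "discrete_prob_family I M" and A: "A \<in> sets (discrete_PiM I)"
    and indep: "\<And>J X. finitely_determined I J X \<Longrightarrow>
      emeasure (PiM I M) (A \<inter> X) = emeasure (PiM I M) X * emeasure (PiM I M) A"
  shows "emeasure (PiM I M) A = 0 \<or> emeasure (PiM I M) A = 1"
proof -
  interpret prob_space "PiM I M" by (rule prob_space_PiM_discrete[OF M])
  have A_M: "A \<in> sets (PiM I M)" using A by (simp add: sets_PiM_discrete[OF M])
  have "density (PiM I M) (indicator A) = density (PiM I M) (\<lambda>_. emeasure (PiM I M) A)"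
  proof (rule measure_eqI_PiM_infinite)
    show "sets (density (PiM I M) (indicator A)) = sets (discrete_PiM I)"
      "sets (density (PiM I M) (\<lambda>_. emeasure (PiM I M) A)) = sets (discrete_PiM I)"
      by (simp_all add: sets_PiM_discrete[OF M])
    show "finite_measure (density (PiM I M) (indicator A))"
      by (intro finite_measureI) (simp add: emeasure_restricted[OF A_M] emeasure_eq_measure)
    fix B :: "'i \<Rightarrow> 'a set" and J assume J: "finite J" "J \<subseteq> I"
    define X where "X = prod_emb I (\<lambda>_. count_space UNIV) J (Pi\<^sub>E J B)"
    have X: "finitely_determined I J X" unfolding X_def by (rule finitely_determined_prod_emb[OF J])
    hence "X \<in> sets (PiM I M)"
      using finitely_determined_in_sets by (simp add: sets_PiM_discrete[OF M])
    thus "emeasure (density (PiM I M) (indicator A)) X =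
        emeasure (density (PiM I M) (\<lambda>_. emeasure (PiM I M) A)) X"
      using indep[OF X] A_M by (simp add: emeasure_restricted emeasure_density_const mult.commute)
  qed
  hence "emeasure (PiM I M) A = emeasure (PiM I M) A * emeasure (PiM I M) A"
    using A_M emeasure_restricted[OF A_M A_M] emeasure_density_const[OF A_M] by simp
  hence "prob A = prob A * prob A"
    by (simp add: emeasure_eq_measure ennreal_mult[symmetric] ennreal_inj)
  hence "prob A = 0 \<or> prob A = 1"
    by (metis mult_cancel_right2)
  thus ?thesis by (auto simp: emeasure_eq_measure)
qed

section \<open>Dyadic step functions in \<open>Z\<^sub>f\<^sub>r\<close>\<close>

lemma floor_mult_pow2_eq:
  assumes "real j / 2 ^ k \<le> d" "d < real (Suc j) / 2 ^ k"
  shows "\<lfloor>d * 2 ^ k\<rfloor> = int j"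
  using assms by (simp add: floor_eq_iff field_simps)

lemma restrict_floor_in_Zfr: "restrict (\<lambda>d. h \<lfloor>d * 2 ^ k\<rfloor>) Dy \<in> Zfr"
proof -
  define ds where "ds = map (\<lambda>j. real j / 2 ^ k) [0..<2 ^ k + 1]"
  have len: "length ds = 2 ^ k + 1" by (simp add: ds_def)
  have nth: "j < 2 ^ k + 1 \<Longrightarrow> ds ! j = real j / 2 ^ k" for j
    by (simp add: ds_def del: upt_Suc)
  have "std_dyadic_partition ds"
    unfolding std_dyadic_partition_def
  proof (intro conjI allI impI)
    show "2 \<le> length ds" "ds ! 0 = 0" using len nth[of 0] by simp_all
    have "ds \<noteq> []" using len by auto
    thus "last ds = 1" using len nth[of "2 ^ k"] by (simp add: last_conv_nth)
    fix j assume j: "Suc j < length ds"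
    show "ds ! j < ds ! Suc j"
      using j nth[of j] nth[of "Suc j"] len by (simp add: divide_strict_right_mono)
    show "dyadic_interval (ds ! j) (ds ! Suc j)"
      unfolding dyadic_interval_def using j nth[of j] nth[of "Suc j"] len
      by (intro exI[of _ j] exI[of _ k]) (simp add: add.commute)
  qed
  moreover have "restrict (\<lambda>d. h \<lfloor>d * 2 ^ k\<rfloor>) Dy d = restrict (\<lambda>d. h \<lfloor>d * 2 ^ k\<rfloor>) Dy d'"
    if "Suc j < length ds" "d \<in> Dy" "d' \<in> Dy"
      "ds ! j \<le> d" "d < ds ! Suc j" "ds ! j \<le> d'" "d' < ds ! Suc j" for j d d'
    using that len nth[of j] nth[of "Suc j"]
      floor_mult_pow2_eq[of j k d] floor_mult_pow2_eq[of j k d']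
    by simp
  ultimately show ?thesis unfolding Zfr_def by blast
qed

lemma floor_mult_pow2_neq:
  assumes "1 / 2 ^ k \<le> \<bar>x - y\<bar>"
  shows "\<lfloor>x * 2 ^ k\<rfloor> \<noteq> \<lfloor>(y::real) * 2 ^ k\<rfloor>"
proof
  assume "\<lfloor>x * 2 ^ k\<rfloor> = \<lfloor>y * 2 ^ k\<rfloor>"
  hence "\<bar>x * 2 ^ k - y * 2 ^ k\<bar> < 1"
    using floor_less_iff[of "x * 2 ^ k"] le_floor_iff[of _ "x * 2 ^ k"]
      floor_less_iff[of "y * 2 ^ k"] le_floor_iff[of _ "y * 2 ^ k"]
    by (simp add: abs_less_iff) linarith
  hence "\<bar>x - y\<bar> * 2 ^ k < 1" by (simp add: abs_mult left_diff_distrib[symmetric])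
  with assms show False by (simp add: field_simps)
qed

lemma exists_floor_mult_pow2_inj_on:
  assumes "finite H"
  shows "\<exists>k. inj_on (\<lambda>x::real. \<lfloor>x * 2 ^ k\<rfloor>) H"
proof -
  define S where "S = insert 1 ({\<bar>x - y\<bar> | x y. x \<in> H \<and> y \<in> H} - {0})"
  have "finite S" using assms by (simp add: S_def finite_image_set2)
  moreover have "S \<noteq> {}" "\<forall>s\<in>S. s > 0" by (auto simp: S_def)
  ultimately have "Min S > 0" by (simp add: Min_gr_iff)
  then obtain k where k: "(1 / 2) ^ k < Min S" using real_arch_pow_inv[of "Min S" "1 / 2"] by auto
  have "\<lfloor>x * 2 ^ k\<rfloor> \<noteq> \<lfloor>y * 2 ^ k\<rfloor>" if "x \<in> H" "y \<in> H" "x \<noteq> y" for x y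
  proof (rule floor_mult_pow2_neq)
    have "\<bar>x - y\<bar> \<in> S" using that by (auto simp: S_def)
    hence "Min S \<le> \<bar>x - y\<bar>" using \<open>finite S\<close> by simp
    thus "1 / 2 ^ k \<le> \<bar>x - y\<bar>" using k by (simp add: power_one_over)
  qed
  thus ?thesis unfolding inj_on_def by blast
qed

text \<open>A step function on the dyadic intervals of a level fine enough to separate \<open>F \<union> G\<close>.\<close>
lemma Zfr_interpolation:
  assumes "finite F" "F \<subseteq> Dy" "finite G" "G \<subseteq> Dy"
  shows "\<exists>g\<in>Zfr. (\<forall>f\<in>F. g f = v f) \<and> (\<forall>d\<in>G - F. g d = 0) \<and>
    (\<forall>d\<in>Dy. \<bar>g d\<bar> \<le> (\<Sum>f\<in>F. \<bar>v f\<bar>))"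
proof -
  obtain k where k: "inj_on (\<lambda>x::real. \<lfloor>x * 2 ^ k\<rfloor>) (F \<union> G)"
    using exists_floor_mult_pow2_inj_on[of "F \<union> G"] assms by auto
  define g where
    "g = restrict (\<lambda>d. \<Sum>f\<in>F. if \<lfloor>d * 2 ^ k\<rfloor> = \<lfloor>f * 2 ^ k\<rfloor> then v f else 0) Dy"
  have "g \<in> Zfr"
    unfolding g_def
    by (rule restrict_floor_in_Zfr[of "\<lambda>z. \<Sum>f\<in>F. if z = \<lfloor>f * 2 ^ k\<rfloor> then v f else 0"])
  moreover have "g f = v f" if "f \<in> F" for f
  proof -
    have "g f = (\<Sum>f'\<in>F. if f = f' then v f' else 0)"
      unfolding g_def using that assms(2) k
      by (auto intro!: sum.cong simp: inj_on_def)
    thus ?thesis using that assms(1) by simp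
  qed
  moreover have "g d = 0" if d: "d \<in> G - F" for d
  proof -
    have "\<lfloor>d * 2 ^ k\<rfloor> \<noteq> \<lfloor>f * 2 ^ k\<rfloor>" if "f \<in> F" for f
      using d that by (intro inj_on_contraD[OF k]) auto
    thus ?thesis unfolding g_def using d assms(4) by auto
  qed
  moreover have "\<bar>g d\<bar> \<le> (\<Sum>f\<in>F. \<bar>v f\<bar>)" if "d \<in> Dy" for d
    unfolding g_def using that
    by (auto intro!: order_trans[OF sum_abs] sum_mono)
  ultimately show ?thesis by blast
qed

section \<open>Ergodicity\<close>

lemma finite_sum_le_outside_finite:
  fixes f :: "'a \<Rightarrow> real"
  assumes "f summable_on A" "\<And>x. x \<in> A \<Longrightarrow> f x \<ge> 0" "e > 0"
  obtains G where "finite G" "G \<subseteq> A" "\<And>J. finite J \<Longrightarrow> J \<subseteq> A - G \<Longrightarrow> sum f J \<le> e"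
proof -
  obtain G where G: "finite G" "G \<subseteq> A" "dist (sum f G) (infsum f A) \<le> e"
    using infsum_finite_approximation[OF assms(1,3)] by blast
  have "sum f J \<le> e" if "finite J" "J \<subseteq> A - G" for J
  proof -
    have "sum f G + sum f J = sum f (G \<union> J)"
      using that G by (intro sum.union_disjoint[symmetric]) auto
    also have "\<dots> \<le> infsum f A"
      using that G assms by (intro finite_sum_le_infsum) auto
    finally show ?thesis using G(3) by (simp add: dist_real_def)
  qed
  with G show ?thesis using that by blast
qed

lemma measure_translate_eq_of_invariant:
  fixes M :: "real \<Rightarrow> int measure"
  assumes M: "discrete_prob_family Dy M" and A: "A \<in> sets (discrete_PiM Dy)"
    and inv: "\<And>x. x \<in> Dy \<rightarrow>\<^sub>E UNIV \<Longrightarrow> act g x \<in> A \<longleftrightarrow> x \<in> A"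
  shows "measure (PiM Dy (\<lambda>i. distr (M i) (count_space UNIV) ((+) (g i)))) A =
    measure (PiM Dy M) A"
proof -
  have act: "act g = (\<lambda>x. restrict (\<lambda>i. g i + x i) Dy)"
    by (simp add: act_def[abs_def])
  have measurable_act: "act g \<in> measurable (PiM Dy M) (discrete_PiM Dy)"
    unfolding act by (rule measurable_coordinatewise[OF M])
  have "measure (PiM Dy (\<lambda>i. distr (M i) (count_space UNIV) ((+) (g i)))) A =
      measure (distr (PiM Dy M) (discrete_PiM Dy) (act g)) A"
    using distr_PiM_coordinatewise[OF M, of "\<lambda>i. (+) (g i)"] unfolding act by simp
  also have "\<dots> = measure (PiM Dy M) (act g -` A \<inter> space (PiM Dy M))"
    by (rule measure_distr[OF measurable_act A])
  also have "act g -` A \<inter> space (PiM Dy M) = A"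
    using inv sets.sets_into_space[OF A]
    by (auto simp: space_PiM_discrete[OF M] space_PiM discrete_prob_family_space[OF M])
  finally show ?thesis .
qed

lemma sum_translation_cost_le:
  fixes \<beta> :: "real \<Rightarrow> real" and g :: "real \<Rightarrow> int" and K :: real
  assumes pos: "\<forall>d\<in>I. \<beta> d > 0" and p: "0 \<le> p" "p \<le> 1 / 2" and "K \<ge> 0"
    and g: "\<And>d. d \<in> I \<Longrightarrow> \<bar>g d\<bar> \<le> K" "\<And>d. d \<in> G - F \<Longrightarrow> g d = 0"
    and tail: "\<And>J. finite J \<Longrightarrow> J \<subseteq> I - G \<Longrightarrow> (\<Sum>d\<in>J. \<beta> d powr p) \<le> e"
    and J: "finite J" "J \<subseteq> I"
  shows "(\<Sum>i\<in>J. if i \<in> F then 0 else \<bar>g i\<bar> * gauss_pmf (\<beta> i) 0) \<le> 2 * K * e"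
proof -
  have "(\<Sum>i\<in>J. if i \<in> F then 0 else \<bar>g i\<bar> * gauss_pmf (\<beta> i) 0) =
      (\<Sum>i\<in>J - G. if i \<in> F then 0 else \<bar>g i\<bar> * gauss_pmf (\<beta> i) 0)"
    using J g(2) by (intro sum.mono_neutral_right) auto
  also have "\<dots> \<le> (\<Sum>i\<in>J - G. 2 * K * \<beta> i powr p)"
  proof (intro sum_mono)
    fix i assume "i \<in> J - G"
    hence i: "i \<in> I" "\<beta> i > 0" using J pos by auto
    have "real_of_int \<bar>g i\<bar> \<le> K" using g(1)[OF i(1)] by linarith
    moreover have "gauss_pmf (\<beta> i) 0 \<le> 2 * \<beta> i powr p"
      using inverse_Zb_le_powr[OF i(2) p] by (simp add: gauss_pmf_0)
    ultimately show "(if i \<in> F then 0 else \<bar>g i\<bar> * gauss_pmf (\<beta> i) 0) \<le> 2 * K * \<beta> i powr p"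
      using gauss_pmf_pos[OF i(2), of 0] \<open>K \<ge> 0\<close>
      by (auto intro: order_trans[OF mult_mono])
  qed
  also have "\<dots> = 2 * K * (\<Sum>i\<in>J - G. \<beta> i powr p)"
    by (simp add: sum_distrib_left)
  also have "\<dots> \<le> 2 * K * e"
    using J tail[of "J - G"] \<open>K \<ge> 0\<close> by (intro mult_left_mono) auto
  finally show ?thesis .
qed

lemma measure_pinned_close_of_invariant:
  fixes \<beta> :: "real \<Rightarrow> real" and p :: real and F :: "real set" and v :: "real \<Rightarrow> int"
  defines "M \<equiv> \<lambda>d. mb (\<beta> d)" and "K \<equiv> real_of_int (\<Sum>f\<in>F. \<bar>v f\<bar>)"
  assumes pos: "\<forall>d\<in>Dy. \<beta> d > 0" and p: "0 \<le> p" "p \<le> 1 / 2"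
    and summable: "(\<lambda>d. \<beta> d powr p) summable_on Dy"
    and A: "A \<in> sets (discrete_PiM Dy)"
    and inv: "\<And>g x. g \<in> Zfr \<Longrightarrow> x \<in> Dy \<rightarrow>\<^sub>E UNIV \<Longrightarrow> act g x \<in> A \<longleftrightarrow> x \<in> A"
    and F: "finite F" "F \<subseteq> Dy" and "e > 0"
  shows "\<bar>measure (PiM Dy (pinned F v M)) A - measure (PiM Dy (pinned F (\<lambda>_. 0) M)) A\<bar>
    \<le> 2 * K * e"
proof -
  have "K \<ge> 0" by (simp add: K_def sum_nonneg)
  have M: "discrete_prob_family Dy M"
    unfolding M_def using pos by (rule discrete_prob_family_mb)
  have M_v: "discrete_prob_family Dy (pinned F v M)"
    and M_0: "discrete_prob_family Dy (pinned F (\<lambda>_. 0) M)"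
    by (intro discrete_prob_family_pinned M)+
  obtain G where G: "finite G" "G \<subseteq> Dy"
    and tail: "\<And>J. finite J \<Longrightarrow> J \<subseteq> Dy - G \<Longrightarrow> (\<Sum>d\<in>J. \<beta> d powr p) \<le> e"
    using finite_sum_le_outside_finite[of "\<lambda>d. \<beta> d powr p" Dy e] summable \<open>e > 0\<close> by auto
  obtain g where g: "g \<in> Zfr" "\<And>f. f \<in> F \<Longrightarrow> g f = v f" "\<And>d. d \<in> G - F \<Longrightarrow> g d = 0"
    "\<And>d. d \<in> Dy \<Longrightarrow> \<bar>g d\<bar> \<le> (\<Sum>f\<in>F. \<bar>v f\<bar>)"
    using Zfr_interpolation[OF F G, of v] by blast
  have g_le_K: "real_of_int \<bar>g d\<bar> \<le> K" if "d \<in> Dy" for d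
    unfolding K_def using g(4)[OF that] by (simp only: of_int_le_iff)
  define N where "N i = distr (pinned F (\<lambda>_. 0) M i) (count_space UNIV) ((+) (g i))" for i
  define \<delta> where "\<delta> i = (if i \<in> F then 0 else \<bar>g i\<bar> * gauss_pmf (\<beta> i) 0)" for i
  txt \<open>Translation by \<open>g\<close> maps the \<open>0\<close>-pinned measure to \<open>PiM Dy N\<close>, whose factors agree with
    the \<open>v\<close>-pinned ones on \<open>F \<union> G\<close> and are cheap translates of them elsewhere.\<close>
  have "measure (PiM Dy N) A = measure (PiM Dy (pinned F (\<lambda>_. 0) M)) A"
    unfolding N_def using M_0 A inv[OF g(1)] by (rule measure_translate_eq_of_invariant)
  moreover have "N i = pinned F v M i" if "i \<in> F" for i
    using that g(2) by (simp add: N_def pinned_def distr_return)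
  hence "emeasure (pinned F v M i) E \<le> emeasure (N i) E + ennreal (\<delta> i) \<and>
      emeasure (N i) E \<le> emeasure (pinned F v M i) E + ennreal (\<delta> i)" if "i \<in> Dy" for i E
    using that pos emeasure_mb_le_distr_add[of "\<beta> i" E "g i"]
      emeasure_distr_add_le_mb[of "\<beta> i" "g i" E]
    by (cases "i \<in> F") (simp_all add: \<delta>_def N_def pinned_def M_def)
  moreover have "sum \<delta> J \<le> 2 * K * e" if "finite J" "J \<subseteq> Dy" for J
    unfolding \<delta>_def using pos p \<open>K \<ge> 0\<close> g_le_K g(3) tail that by (rule sum_translation_cost_le)
  moreover have "\<delta> i \<ge> 0" if "i \<in> Dy" for i
    using gauss_pmf_pos[of "\<beta> i" 0] pos that by (simp add: \<delta>_def)
  moreover have "discrete_prob_family Dy N"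
    unfolding N_def by (rule discrete_prob_family_distr[OF M_0])
  ultimately show ?thesis
    using abs_measure_PiM_diff_le[OF M_v, of N \<delta> "2 * K * e" A] A by auto
qed

lemma emeasure_pinned_eq_of_invariant:
  fixes \<beta> :: "real \<Rightarrow> real" and p :: real
  defines "M \<equiv> \<lambda>d. mb (\<beta> d)"
  assumes pos: "\<forall>d\<in>Dy. \<beta> d > 0" and p: "0 \<le> p" "p \<le> 1 / 2"
    and summable: "(\<lambda>d. \<beta> d powr p) summable_on Dy"
    and A: "A \<in> sets (discrete_PiM Dy)"
    and inv: "\<And>g x. g \<in> Zfr \<Longrightarrow> x \<in> Dy \<rightarrow>\<^sub>E UNIV \<Longrightarrow> act g x \<in> A \<longleftrightarrow> x \<in> A"
    and F: "finite F" "F \<subseteq> Dy"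
  shows "emeasure (PiM Dy (pinned F v M)) A = emeasure (PiM Dy (pinned F (\<lambda>_. 0) M)) A"
proof -
  define K where "K = real_of_int (\<Sum>f\<in>F. \<bar>v f\<bar>)"
  have "K \<ge> 0" by (simp add: K_def sum_nonneg)
  have M: "discrete_prob_family Dy M"
    unfolding M_def using pos by (rule discrete_prob_family_mb)
  interpret P0: prob_space "PiM Dy (pinned F (\<lambda>_. 0) M)"
    by (intro prob_space_PiM_discrete discrete_prob_family_pinned M)
  interpret Pv: prob_space "PiM Dy (pinned F v M)"
    by (intro prob_space_PiM_discrete discrete_prob_family_pinned M)
  have "\<bar>Pv.prob A - P0.prob A\<bar> \<le> 0 + e" if "e > 0" for e
  proof -
    have "2 * K * (e / (2 * K + 1)) \<le> e"
      using \<open>e > 0\<close> \<open>K \<ge> 0\<close> by (simp add: field_simps)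
    moreover have "e / (2 * K + 1) > 0" using \<open>e > 0\<close> \<open>K \<ge> 0\<close> by simp
    ultimately show ?thesis
      using measure_pinned_close_of_invariant[OF pos p summable A inv F, of "e / (2 * K + 1)" v]
      unfolding M_def K_def by simp
  qed
  hence "Pv.prob A = P0.prob A" by (metis abs_le_zero_iff eq_iff_diff_eq_0 field_le_epsilon)
  thus ?thesis by (simp add: P0.emeasure_eq_measure Pv.emeasure_eq_measure)
qed

lemma emeasure_Int_finitely_determined_of_invariant:
  fixes \<beta> :: "real \<Rightarrow> real" and p :: real
  defines "M \<equiv> \<lambda>d. mb (\<beta> d)"
  assumes pos: "\<forall>d\<in>Dy. \<beta> d > 0" and p: "0 \<le> p" "p \<le> 1 / 2"
    and summable: "(\<lambda>d. \<beta> d powr p) summable_on Dy"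
    and A: "A \<in> sets (discrete_PiM Dy)"
    and inv: "\<And>g x. g \<in> Zfr \<Longrightarrow> x \<in> Dy \<rightarrow>\<^sub>E UNIV \<Longrightarrow> act g x \<in> A \<longleftrightarrow> x \<in> A"
    and X: "finitely_determined Dy J X"
  shows "emeasure (PiM Dy M) (A \<inter> X) = emeasure (PiM Dy M) X * emeasure (PiM Dy M) A"
proof -
  have M: "discrete_prob_family Dy M"
    unfolding M_def using pos by (rule discrete_prob_family_mb)
  have J: "finite J" "J \<subseteq> Dy" using X by (auto simp: finitely_determined_def)
  have "emeasure (PiM Dy M) (A \<inter> cylinder Dy J w) =
      emeasure (PiM Dy M) (cylinder Dy J w) * emeasure (PiM Dy (pinned J (\<lambda>_. 0) M)) A" for w
    using emeasure_PiM_Int_cylinder[OF M J A, of w]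
      emeasure_pinned_eq_of_invariant[OF pos p summable A inv J, of w]
    unfolding M_def by simp
  thus ?thesis by (rule emeasure_Int_finitely_determined[OF M A _ X])
qed

theorem corollary3p14:
  fixes \<beta> :: "real \<Rightarrow> real" and p :: real
  assumes "\<forall>d\<in>Dy. \<beta> d > 0"
    and "0 < p" and "p < 1/2"
    and "(\<lambda>d. \<beta> d powr p) summable_on Dy"
  shows "ergodic_action (mbetaD \<beta>)"
  unfolding ergodic_action_def
proof (intro ballI impI)
  define M where "M = (\<lambda>d. mb (\<beta> d))"
  have M: "discrete_prob_family Dy M"
    unfolding M_def using assms(1) by (rule discrete_prob_family_mb)
  interpret prob_space "PiM Dy M" by (rule prob_space_PiM_discrete[OF M])
  have \<mu>: "mbetaD \<beta> = PiM Dy M" by (simp add: mbetaD_def M_def)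
  fix A assume A: "A \<in> sets (mbetaD \<beta>)"
    and "\<forall>g\<in>Zfr. \<forall>x\<in>space (mbetaD \<beta>). act g x \<in> A \<longleftrightarrow> x \<in> A"
  hence A': "A \<in> sets (discrete_PiM Dy)"
    and inv: "\<And>g x. g \<in> Zfr \<Longrightarrow> x \<in> Dy \<rightarrow>\<^sub>E UNIV \<Longrightarrow> act g x \<in> A \<longleftrightarrow> x \<in> A"
    by (simp_all add: \<mu> sets_PiM_discrete[OF M] space_PiM_discrete[OF M])
  have "emeasure (PiM Dy M) A = 0 \<or> emeasure (PiM Dy M) A = 1"
    using emeasure_Int_finitely_determined_of_invariant[OF assms(1) _ _ assms(4) A' inv] assms(2,3)
    by (intro emeasure_PiM_zero_one[OF M A']) (simp add: M_def)
  moreover have "A \<in> events" using A by (simp add: \<mu>)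
  ultimately show "emeasure (mbetaD \<beta>) A = 0 \<or> emeasure (mbetaD \<beta>) (space (mbetaD \<beta>) - A) = 0"
    unfolding \<mu> using prob_compl[of A] by (simp add: emeasure_eq_measure)
qed

end
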